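(* Let $T$ be a tree with $p\ge 4$ pendant vertices and let $u_1,u_2,u_3,u_4$ be four distinct pendant vertices of $T$. Let $H=\bigcup_{1\le i<j\le 4}P_{u_i,u_j}$ be the minimal subtree of $T$ containing these four vertices. If $m(T,1)\ge p-2$, then $m(H,1)\ge 2$.
   Context: $m(G,\lambda)$ denotes the multiplicity of $\lambda$ as an eigenvalue of the Laplacian matrix $L(G)=D(G)-A(G)$ (zero if not an eigenvalue). A pendant vertex has degree $1$. $P_{r,s}$ is the path in $T$ from $r$ to $s$. *)

theory Defs
  imports "Jordan_Normal_Form.Char_Poly"
begin

definition simple_graph :: "'a set \<Rightarrow> ('a \<times> 'a) set \<Rightarrow> bool" where
  "simple_graph V E \<longleftrightarrow> finite V \<and> E \<subseteq> V \<times> V \<and> sym E \<and> (\<forall>v. (v, v) \<notin> E)"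

definition walk :: "('a \<times> 'a) set \<Rightarrow> 'a list \<Rightarrow> bool" where
  "walk E xs \<longleftrightarrow> xs \<noteq> [] \<and> (\<forall>i. Suc i < length xs \<longrightarrow> (xs ! i, xs ! Suc i) \<in> E)"

definition is_path :: "('a \<times> 'a) set \<Rightarrow> 'a \<Rightarrow> 'a \<Rightarrow> 'a list \<Rightarrow> bool" where
  "is_path E r s xs \<longleftrightarrow> walk E xs \<and> distinct xs \<and> hd xs = r \<and> last xs = s"

definition is_cycle :: "('a \<times> 'a) set \<Rightarrow> 'a list \<Rightarrow> bool" where
  "is_cycle E xs \<longleftrightarrow> walk E xs \<and> distinct xs \<and> length xs \<ge> 3 \<and> (last xs, hd xs) \<in> E"

definition connected_graph :: "'a set \<Rightarrow> ('a \<times> 'a) set \<Rightarrow> bool" where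
  "connected_graph V E \<longleftrightarrow> V \<noteq> {} \<and> (\<forall>r\<in>V. \<forall>s\<in>V. \<exists>xs. is_path E r s xs)"

definition is_tree :: "'a set \<Rightarrow> ('a \<times> 'a) set \<Rightarrow> bool" where
  "is_tree V E \<longleftrightarrow> simple_graph V E \<and> connected_graph V E \<and> (\<nexists>xs. is_cycle E xs)"

definition degree :: "'a set \<Rightarrow> ('a \<times> 'a) set \<Rightarrow> 'a \<Rightarrow> nat" where
  "degree V E v = card {w \<in> V. (v, w) \<in> E}"

definition pendant_vertices :: "'a set \<Rightarrow> ('a \<times> 'a) set \<Rightarrow> 'a set" where
  "pendant_vertices V E = {v \<in> V. degree V E v = 1}"

text \<open>Vertices and edges of the path P_{r,s} (in a tree the path is unique;
  we take the union over all paths from r to s).\<close>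
definition path_verts :: "('a \<times> 'a) set \<Rightarrow> 'a \<Rightarrow> 'a \<Rightarrow> 'a set" where
  "path_verts E r s = \<Union>{set xs | xs. is_path E r s xs}"

definition path_edges :: "('a \<times> 'a) set \<Rightarrow> 'a \<Rightarrow> 'a \<Rightarrow> ('a \<times> 'a) set" where
  "path_edges E r s = \<Union>{{(xs ! i, xs ! Suc i) | i. Suc i < length xs} \<union>
                          {(xs ! Suc i, xs ! i) | i. Suc i < length xs} | xs. is_path E r s xs}"

definition vlist :: "'a set \<Rightarrow> 'a list" where
  "vlist V = (SOME xs. distinct xs \<and> set xs = V)"

definition laplacian :: "'a set \<Rightarrow> ('a \<times> 'a) set \<Rightarrow> real mat" where
  "laplacian V E = mat (card V) (card V) (\<lambda>(i, j).
     if i = j then real (degree V E (vlist V ! i))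
     else if (vlist V ! i, vlist V ! j) \<in> E then -1 else 0)"

text \<open>m(G, lambda): multiplicity of lambda as a root of the characteristic
  polynomial of the Laplacian (0 if not an eigenvalue).\<close>
definition lap_mult :: "'a set \<Rightarrow> ('a \<times> 'a) set \<Rightarrow> real \<Rightarrow> nat" where
  "lap_mult V E lam = order lam (char_poly (laplacian V E))"

end

theory Submission
  imports Defs "Jordan_Normal_Form.Jordan_Normal_Form_Uniqueness"
    "Jordan_Normal_Form.Jordan_Normal_Form_Existence" "Jordan_Normal_Form.DL_Rank"
begin

text \<open>
  The Laplacian is real symmetric, so m(T, 1) is the dimension of the eigenspace
  ker (L(T) - I). Asking an eigenvector to vanish also at the p - 4 pendant vertices outside
  {u1, u2, u3, u4} costs at most p - 4 dimensions, which leaves a space of dimension at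
  least 2. An eigenvector vanishing at a pendant vertex u vanishes at its neighbour w as well
  (the eigen-equation at u reads x u - x w = x u), so u can be deleted without disturbing the
  eigen-equations of the remaining vertices. Pruning T in this way down to H shows that each
  vector of that space vanishes off H and restricts to an eigenvector of L(H) for 1; the
  restriction is therefore injective, and m(H, 1) \<ge> dim ker (L(H) - I) \<ge> 2.
\<close>

section \<open>Linear algebra\<close>

lemma (in vectorspace) subspace_fin_dim:
  assumes fd: "fin_dim" and X: "subspace K X V"
  shows "vectorspace.fin_dim K (vs X)"
proof -
  interpret X: vectorspace K "vs X" using subspace_is_vs[OF X] .
  let ?P = "\<lambda>S. S \<subseteq> carrier (vs X) \<and> X.lin_indpt S"
  have bound: "finite S \<and> card S \<le> dim" if "?P S" for S
  proof -
    have SX: "S \<subseteq> X" using that by simp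
    have "lin_indpt S"
      using that span_li_not_depend(2)[OF SX is_module[OF X]] by simp
    moreover have "S \<subseteq> carrier V" using SX X unfolding subspace_def submodule_def by auto
    ultimately show ?thesis using li_le_dim[OF fd] by auto
  qed
  have "?P {}" by (simp add: X.lin_dep_def)
  from maximal_exists[of ?P dim, OF bound this]
  obtain A where "finite A" "maximal A ?P" by blast
  then show ?thesis using X.max_li_is_basis unfolding X.fin_dim_def X.basis_def by blast
qed

lemma (in linear_map) dim_image_le:
  assumes "W.fin_dim"
  shows "vectorspace.dim K (W.vs imT) \<le> W.dim"
  using W.subspace_dim[OF imT_is_subspace assms W.subspace_fin_dim[OF assms imT_is_subspace]] .

lemma (in kernel) kernel_fin_dim: "Ker.fin_dim"
proof -
  from kernel_basis_exists[OF A] obtain B where "finite B" "basis B" by blast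
  then show ?thesis unfolding Ker.fin_dim_def Ker.basis_def by blast
qed

lemma linear_map_mult_mat_vec_kernel:
  fixes A :: "'a::field mat"
  assumes A: "A \<in> carrier_mat nra nc" and D: "D \<in> carrier_mat nrd m" and R: "R \<in> carrier_mat m nc"
    and maps: "\<And>v. v \<in> mat_kernel A \<Longrightarrow> R *\<^sub>v v \<in> mat_kernel D"
  shows "linear_map class_ring (kernel.VK nc A) (kernel.VK m D) (\<lambda>v. R *\<^sub>v v)"
proof -
  interpret KA: kernel nra nc A by (unfold_locales, rule A)
  interpret KD: kernel nrd m D by (unfold_locales, rule D)
  have "(\<lambda>v. R *\<^sub>v v) \<in> module_hom class_ring KA.VK KD.VK"
    unfolding module_hom_def using maps mat_kernel_carrier[OF A] R
    by (auto simp: mult_mat_vec intro!: mult_add_distrib_mat_vec[OF R])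
  then show ?thesis
    by (intro linear_map.intro mod_hom.intro mod_hom_axioms.intro KA.Ker.vectorspace_axioms
        KD.Ker.vectorspace_axioms KA.Ker.module_axioms KD.Ker.module_axioms)
qed

lemma kernel_dim_le_of_inj:
  fixes A :: "'a::field mat"
  assumes A: "A \<in> carrier_mat nra nc" and D: "D \<in> carrier_mat nrd m" and R: "R \<in> carrier_mat m nc"
    and maps: "\<And>v. v \<in> mat_kernel A \<Longrightarrow> R *\<^sub>v v \<in> mat_kernel D"
    and inj: "\<And>v. v \<in> mat_kernel A \<Longrightarrow> R *\<^sub>v v = 0\<^sub>v m \<Longrightarrow> v = 0\<^sub>v nc"
  shows "kernel_dim A \<le> kernel_dim D"
proof -
  interpret KA: kernel nra nc A by (unfold_locales, rule A)
  interpret KD: kernel nrd m D by (unfold_locales, rule D)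
  note lm = linear_map_mult_mat_vec_kernel[OF A D R maps]
  have "carrier (KA.VK\<lparr>carrier := mod_hom.ker KA.VK KD.VK (\<lambda>v. R *\<^sub>v v)\<rparr>) = {0\<^sub>v nc}"
    using inj A R mod_hom.ker_def[OF linear_map.axioms(3)[OF lm]] by (auto simp: mat_kernel_def)
  then have "inj_on (\<lambda>v. R *\<^sub>v v) (carrier KA.VK)"
    using linear_map.Ke0_imp_inj[OF lm] by simp
  then have "vectorspace.dim class_ring (KA.VK\<lparr>carrier := mod_hom.ker KA.VK KD.VK (\<lambda>v. R *\<^sub>v v)\<rparr>) = 0"
    using linear_map.inj_imp_dim_ker0[OF lm] by simp
  then show ?thesis
    using linear_map.rank_nullity[OF lm KA.kernel_fin_dim] linear_map.dim_image_le[OF lm KD.kernel_fin_dim]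
    by simp
qed

lemma mat_kernel_append_rows:
  fixes B :: "'a::field mat"
  assumes B: "B \<in> carrier_mat nr nc" and C: "C \<in> carrier_mat r nc"
  shows "mat_kernel (B @\<^sub>r C) = {v \<in> mat_kernel B. C *\<^sub>v v = 0\<^sub>v r}"
proof -
  have zero: "0\<^sub>v (nr + r) = (0\<^sub>v nr @\<^sub>v 0\<^sub>v r :: 'a vec)" by (rule eq_vecI) auto
  have "(B @\<^sub>r C) *\<^sub>v v = 0\<^sub>v (nr + r) \<longleftrightarrow> B *\<^sub>v v = 0\<^sub>v nr \<and> C *\<^sub>v v = 0\<^sub>v r"
    if v: "v \<in> carrier_vec nc" for v
  proof -
    have "B *\<^sub>v v \<in> carrier_vec nr" using B v by simp
    then show ?thesis
      unfolding mat_mult_append[OF B C v] zero by (rule append_vec_eq) simp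
  qed
  moreover have "B @\<^sub>r C \<in> carrier_mat (nr + r) nc"
    using B C by auto
  ultimately show ?thesis
    using B unfolding mat_kernel_def by auto
qed

lemma kernel_dim_le_append_rows:
  fixes B :: "'a::field mat"
  assumes B: "B \<in> carrier_mat nr nc" and C: "C \<in> carrier_mat r nc"
  shows "kernel_dim B \<le> kernel_dim (B @\<^sub>r C) + r"
proof -
  let ?Z = "0\<^sub>m 0 r :: 'a mat"
  have Z: "?Z \<in> carrier_mat 0 r" by simp
  interpret KB: kernel nr nc B by (unfold_locales, rule B)
  interpret KBC: kernel "nr + r" nc "B @\<^sub>r C" by (unfold_locales, insert B C, auto)
  interpret KZ: kernel 0 r ?Z by (unfold_locales, rule Z)
  have maps: "C *\<^sub>v v \<in> mat_kernel ?Z" if "v \<in> mat_kernel B" for v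
    by (rule mat_kernelI[OF Z], rule carrier_vecI, insert C, auto)
  note lm = linear_map_mult_mat_vec_kernel[OF B Z C maps]
  have ker: "mod_hom.ker KB.VK KZ.VK (\<lambda>v. C *\<^sub>v v) = mat_kernel (B @\<^sub>r C)"
    using mod_hom.ker_def[OF linear_map.axioms(3)[OF lm]]
    unfolding mat_kernel_append_rows[OF B C] by auto
  have "KZ.dim = r"
    using find_base_vectors(6)[of ?Z 0 r] by (simp add: row_echelon_form_def pivot_fun_def)
  moreover have "vectorspace.dim class_ring (KB.VK\<lparr>carrier := mat_kernel (B @\<^sub>r C)\<rparr>) = KBC.dim"
    by simp
  ultimately show ?thesis
    using linear_map.rank_nullity[OF lm KB.kernel_fin_dim] linear_map.dim_image_le[OF lm KZ.kernel_fin_dim]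
    unfolding ker KB.kernel_dim KBC.kernel_dim by simp
qed

lemma sum_list_min_le: "sum_list (map (min k) xs) \<le> sum_list (xs :: nat list)"
  by (induct xs) (auto intro: add_mono)

lemma sum_list_min_2_eq_min_1:
  "sum_list (map (min 2) xs) = sum_list (map (min 1) xs) \<Longrightarrow> sum_list xs = sum_list (map (min 1) (xs :: nat list))"
proof (induct xs)
  case (Cons a xs)
  have "sum_list (map (min 1) xs) \<le> sum_list (map (min 2) xs)"
    by (induct xs) (auto intro: add_mono)
  then have "min 2 a = min 1 a" "sum_list (map (min 2) xs) = sum_list (map (min 1) xs)"
    using Cons(2) by auto
  with Cons(1) show ?case by auto
qed simp

lemma complex_jordan_nf_exists:
  fixes A :: "complex mat"
  assumes "A \<in> carrier_mat n n"
  obtains n_as where "jordan_nf A n_as"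
  using char_poly_factorized[OF assms] jordan_nf_exists[OF assms] by blast

lemma kernel_dim_char_matrix_power:
  assumes A: "A \<in> carrier_mat n n" and "jordan_nf A n_as"
  shows "kernel_dim (char_matrix A e ^\<^sub>m k) = sum_list (map (min k) (map fst (filter (\<lambda>(_, e'). e' = e) n_as)))"
  using dim_gen_eigenspace[OF assms(2), of e k] unfolding dim_gen_eigenspace_def by simp

lemma order_char_poly_jordan:
  assumes "jordan_nf A n_as"
  shows "Polynomial.order e (char_poly A) = sum_list (map fst (filter (\<lambda>(_, e'). e' = e) n_as))"
  unfolding jordan_nf_order[OF assms] by (metis (no_types, lifting) case_prod_beta' filter_cong)

lemma kernel_dim_char_matrix_le_order:
  fixes A :: "complex mat"
  assumes A: "A \<in> carrier_mat n n"
  shows "kernel_dim (char_matrix A e) \<le> Polynomial.order e (char_poly A)"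
proof -
  obtain n_as where jnf: "jordan_nf A n_as" using complex_jordan_nf_exists[OF A] .
  have "char_matrix A e ^\<^sub>m 1 = char_matrix A e" using A by simp
  then show ?thesis
    using kernel_dim_char_matrix_power[OF A jnf, of e 1] order_char_poly_jordan[OF jnf, of e]
      sum_list_min_le by metis
qed

text \<open>The hypothesis forces every Jordan block for e to have size one.\<close>
lemma order_char_poly_eq_kernel_dim:
  fixes A :: "complex mat"
  assumes A: "A \<in> carrier_mat n n"
    and ker: "mat_kernel (char_matrix A e * char_matrix A e) = mat_kernel (char_matrix A e)"
  shows "Polynomial.order e (char_poly A) = kernel_dim (char_matrix A e)"
proof -
  obtain n_as where jnf: "jordan_nf A n_as" using complex_jordan_nf_exists[OF A] .
  have C: "char_matrix A e \<in> carrier_mat n n" using A by simp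
  have "char_matrix A e ^\<^sub>m 1 = char_matrix A e" "char_matrix A e ^\<^sub>m 2 = char_matrix A e * char_matrix A e"
    using C by (simp_all add: numeral_2_eq_2)
  moreover have "kernel_dim (char_matrix A e * char_matrix A e) = kernel_dim (char_matrix A e)"
    using ker C by (simp add: kernel_dim_def)
  ultimately show ?thesis
    using kernel_dim_char_matrix_power[OF A jnf, of e] order_char_poly_jordan[OF jnf, of e]
      sum_list_min_2_eq_min_1 by metis
qed

lemma conjugate_mult_mat_vec:
  fixes B :: "complex mat"
  assumes B: "B \<in> carrier_mat n n" and v: "v \<in> carrier_vec n"
  shows "conjugate (B *\<^sub>v v) = map_mat cnj B *\<^sub>v conjugate v"
  using B v by (intro eq_vecI) (auto simp: scalar_prod_def cnj_sum intro!: sum.cong)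

lemma mat_kernel_mult_self_hermitian:
  fixes B :: "complex mat"
  assumes B: "B \<in> carrier_mat n n" and herm: "transpose_mat B = map_mat cnj B"
  shows "mat_kernel (B * B) = mat_kernel B"
proof
  show "mat_kernel B \<subseteq> mat_kernel (B * B)" by (rule mat_kernel_mult_subset[OF B B])
  show "mat_kernel (B * B) \<subseteq> mat_kernel B"
  proof
    fix v assume "v \<in> mat_kernel (B * B)"
    then have v: "v \<in> carrier_vec n" and BBv: "B * B *\<^sub>v v = 0\<^sub>v n"
      using mat_kernelD[of "B * B" n n] B by auto
    define w where "w = B *\<^sub>v v"
    have w: "w \<in> carrier_vec n" using B v by (simp add: w_def)
    have Bw: "B *\<^sub>v w = 0\<^sub>v n" using BBv B v by (simp add: w_def assoc_mult_mat_vec)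
    have "w \<bullet>c w = w \<bullet> (transpose_mat B *\<^sub>v conjugate v)"
      using B v by (simp add: w_def conjugate_mult_mat_vec herm)
    also have "\<dots> = (transpose_mat B *\<^sub>v conjugate v) \<bullet> w"
      using B v by (intro comm_scalar_prod[OF w]) simp
    also have "\<dots> = conjugate v \<bullet> (B *\<^sub>v w)"
      using B w v by (intro transpose_vec_mult_scalar) auto
    also have "\<dots> = 0" using Bw v by simp
    finally have "w = 0\<^sub>v n" using w by simp
    then show "v \<in> mat_kernel B" using B v by (auto simp: w_def intro: mat_kernelI)
  qed
qed

lemma order_char_poly_of_real:
  assumes "A \<in> carrier_mat n n"
  shows "Polynomial.order (of_real x) (char_poly (map_mat complex_of_real A)) = Polynomial.order x (char_poly A)"
proof -
  interpret map_poly_inj_idom_divide_hom "of_real :: real \<Rightarrow> complex" ..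
  show ?thesis unfolding of_real_hom.char_poly_hom[OF assms] by (rule order_hom)
qed

section \<open>Paths in trees\<close>

lemma card_ge_2_ex_neq:
  assumes "2 \<le> card A"
  shows "\<exists>a\<in>A. a \<noteq> v"
proof (rule ccontr)
  assume "\<not> (\<exists>a\<in>A. a \<noteq> v)"
  then have "card A \<le> card {v}" by (intro card_mono) auto
  with assms show False by simp
qed

lemma walk_Nil [simp]: "\<not> walk E []"
  by (simp add: walk_def)

lemma walk_single [simp]: "walk E [a]"
  by (simp add: walk_def)

lemma walk_Cons_Cons [simp]: "walk E (a # b # xs) \<longleftrightarrow> (a, b) \<in> E \<and> walk E (b # xs)"
  unfolding walk_def by (auto simp: nth_Cons split: nat.splits)

lemma walk_nth: "walk E xs \<Longrightarrow> Suc i < length xs \<Longrightarrow> (xs ! i, xs ! Suc i) \<in> E"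
  by (simp add: walk_def)

lemma walk_Cons: "walk E xs \<Longrightarrow> (y, hd xs) \<in> E \<Longrightarrow> walk E (y # xs)"
  by (cases xs) auto

lemma walk_snoc: "walk E xs \<Longrightarrow> (last xs, y) \<in> E \<Longrightarrow> walk E (xs @ [y])"
  by (induct xs rule: induct_list012) auto

lemma walk_rev: "sym E \<Longrightarrow> walk E xs \<Longrightarrow> walk E (rev xs)"
proof (induct xs rule: induct_list012)
  case (3 a b xs)
  then have "walk E (rev (b # xs))" "(last (rev (b # xs)), a) \<in> E"
    by (auto dest: symD)
  then show ?case using walk_snoc by fastforce
qed auto

lemma walk_take: "walk E xs \<Longrightarrow> 0 < k \<Longrightarrow> walk E (take k xs)"
  unfolding walk_def by auto

lemma walk_mono: "walk E xs \<Longrightarrow> E \<subseteq> F \<Longrightarrow> walk F xs"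
  unfolding walk_def by blast

lemma walk_set_subset: "walk E xs \<Longrightarrow> hd xs \<in> V \<Longrightarrow> E \<subseteq> V \<times> V \<Longrightarrow> set xs \<subseteq> V"
  by (induct xs rule: induct_list012) auto

lemma walk_hd_mem: "walk E xs \<Longrightarrow> 2 \<le> length xs \<Longrightarrow> E \<subseteq> V \<times> V \<Longrightarrow> hd xs \<in> V"
  by (induct xs rule: induct_list012) auto

lemma path_set_subset: "simple_graph V E \<Longrightarrow> is_path E r s xs \<Longrightarrow> r \<in> V \<Longrightarrow> set xs \<subseteq> V"
  unfolding is_path_def simple_graph_def using walk_set_subset by blast

lemma path_length_ge_2: "is_path E r s xs \<Longrightarrow> r \<noteq> s \<Longrightarrow> 2 \<le> length xs"
  unfolding is_path_def by (cases xs; cases "tl xs") auto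

lemma hd_neq_last_of_distinct: "distinct xs \<Longrightarrow> 2 \<le> length xs \<Longrightarrow> hd xs \<noteq> last xs"
  by (cases xs rule: rev_cases) (auto simp: hd_append split: if_splits)

definition neighbors :: "'a set \<Rightarrow> ('a \<times> 'a) set \<Rightarrow> 'a \<Rightarrow> 'a set" where
  "neighbors V E v = {w \<in> V. (v, w) \<in> E}"

lemma degree_eq_card_neighbors: "degree V E v = card (neighbors V E v)"
  unfolding degree_def neighbors_def ..

lemma finite_neighbors: "simple_graph V E \<Longrightarrow> finite (neighbors V E v)"
  unfolding simple_graph_def neighbors_def by auto

lemma pendant_neighbor:
  assumes "degree V E u = 1"
  obtains w where "neighbors V E u = {w}"
  using assms unfolding degree_eq_card_neighbors by (metis card_1_singletonE)

lemma pendant_notin_path: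
  assumes sg: "simple_graph V E" and deg: "degree V E u = 1"
    and p: "is_path E r s xs" and ur: "u \<noteq> r" and us: "u \<noteq> s"
  shows "u \<notin> set xs"
proof
  assume "u \<in> set xs"
  then obtain i where i: "i < length xs" "xs ! i = u" by (metis in_set_conv_nth)
  from p have w: "walk E xs" and d: "distinct xs" and h: "hd xs = r" and l: "last xs = s"
    unfolding is_path_def by auto
  have ne: "xs \<noteq> []" using w by auto
  obtain j where j: "i = Suc j" using i h ur ne by (cases i) (auto simp: hd_conv_nth)
  have il: "Suc i < length xs"
  proof (rule ccontr)
    assume "\<not> Suc i < length xs"
    then have "i = length xs - 1" using i(1) by simp
    then show False using i l us ne by (simp add: last_conv_nth)
  qed
  have sym: "sym E" and EV: "E \<subseteq> V \<times> V" using sg unfolding simple_graph_def by auto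
  have "(xs ! j, u) \<in> E" "(u, xs ! Suc i) \<in> E"
    using walk_nth[OF w, of j] walk_nth[OF w, of i] i j il by auto
  then have "{xs ! j, xs ! Suc i} \<subseteq> neighbors V E u"
    using sym EV unfolding neighbors_def by (auto dest: symD)
  moreover have "xs ! j \<noteq> xs ! Suc i" using d il j by (simp add: nth_eq_iff_index_eq)
  ultimately have "card {xs ! j, xs ! Suc i} \<le> degree V E u"
    unfolding degree_eq_card_neighbors by (intro card_mono[OF finite_neighbors[OF sg]])
  then show False using deg \<open>xs ! j \<noteq> xs ! Suc i\<close> by simp
qed

definition edges_avoiding :: "('a \<times> 'a) set \<Rightarrow> 'a \<Rightarrow> ('a \<times> 'a) set" where
  "edges_avoiding E u = {(a, b) \<in> E. a \<noteq> u \<and> b \<noteq> u}"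

lemma walk_edges_avoiding: "walk E xs \<Longrightarrow> u \<notin> set xs \<Longrightarrow> walk (edges_avoiding E u) xs"
  unfolding walk_def edges_avoiding_def by (auto dest: nth_mem)

lemma is_path_edges_avoiding_pendant_iff:
  assumes sg: "simple_graph V E" and deg: "degree V E u = 1" and "u \<noteq> r" "u \<noteq> s"
  shows "is_path (edges_avoiding E u) r s xs \<longleftrightarrow> is_path E r s xs"
proof
  assume "is_path (edges_avoiding E u) r s xs"
  then show "is_path E r s xs"
    unfolding is_path_def edges_avoiding_def by (auto elim: walk_mono)
next
  assume p: "is_path E r s xs"
  then have "u \<notin> set xs" using pendant_notin_path[OF sg deg] assms(3,4) by blast
  with p show "is_path (edges_avoiding E u) r s xs"
    unfolding is_path_def by (simp add: walk_edges_avoiding)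
qed

lemma neighbors_edges_avoiding:
  "v \<noteq> u \<Longrightarrow> neighbors (V - {u}) (edges_avoiding E u) v = neighbors V E v - {u}"
  unfolding neighbors_def edges_avoiding_def by auto

lemma is_tree_delete_pendant:
  assumes tree: "is_tree V E" and deg: "degree V E u = 1" and a: "a \<in> V" "a \<noteq> u"
  shows "is_tree (V - {u}) (edges_avoiding E u)"
  unfolding is_tree_def
proof (intro conjI)
  have sg: "simple_graph V E" and con: "connected_graph V E" and acyc: "\<nexists>xs. is_cycle E xs"
    using tree unfolding is_tree_def by auto
  show "simple_graph (V - {u}) (edges_avoiding E u)"
    using sg unfolding simple_graph_def edges_avoiding_def sym_def by auto
  show "connected_graph (V - {u}) (edges_avoiding E u)"
    unfolding connected_graph_def
  proof (intro conjI ballI)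
    show "V - {u} \<noteq> {}" using a by auto
    fix r s assume rs: "r \<in> V - {u}" "s \<in> V - {u}"
    then obtain xs where "is_path E r s xs" using con unfolding connected_graph_def by blast
    then show "\<exists>xs. is_path (edges_avoiding E u) r s xs"
      using is_path_edges_avoiding_pendant_iff[OF sg deg, of r s] rs by auto
  qed
  show "\<nexists>xs. is_cycle (edges_avoiding E u) xs"
  proof
    assume "\<exists>xs. is_cycle (edges_avoiding E u) xs"
    then obtain xs where "is_cycle (edges_avoiding E u) xs" ..
    then have "is_cycle E xs"
      unfolding is_cycle_def edges_avoiding_def by (auto elim: walk_mono)
    with acyc show False by blast
  qed
qed

lemma pendants_not_adjacent:
  assumes tree: "is_tree V E" and da: "degree V E a = 1" and du: "degree V E u = 1"
    and b: "b \<in> V" "b \<noteq> a" "b \<noteq> u" and a: "a \<in> V" and au: "a \<noteq> u"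
  shows "(a, u) \<notin> E"
proof
  assume au_E: "(a, u) \<in> E"
  have sg: "simple_graph V E" and con: "connected_graph V E" using tree unfolding is_tree_def by auto
  obtain xs where p: "is_path E a b xs" using con a b unfolding connected_graph_def by blast
  have len: "2 \<le> length xs" using path_length_ge_2[OF p] b(2) by simp
  have w: "walk E xs" and h: "xs ! 0 = a"
    using p len unfolding is_path_def by (cases xs; auto)+
  then have "(a, xs ! 1) \<in> E" using walk_nth[OF w, of 0] len by simp
  moreover obtain w' where "neighbors V E a = {w'}" using pendant_neighbor[OF da] .
  moreover have "E \<subseteq> V \<times> V" using sg unfolding simple_graph_def by auto
  ultimately have "xs ! 1 \<in> {w'}" "u \<in> {w'}"
    using au_E unfolding neighbors_def by auto
  then have "xs ! 1 = u" by simp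
  then have "u \<in> set xs" using len by (metis One_nat_def Suc_1 Suc_le_lessD nth_mem)
  with pendant_notin_path[OF sg du p] au b(3) show False by blast
qed

text \<open>A neighbour xs ! j of the first vertex with j \<ge> 2 would close the cycle take (Suc j) xs.\<close>
lemma pendant_if_unextendable:
  assumes tree: "is_tree V E" and w: "walk E xs" and d: "distinct xs" and len: "2 \<le> length xs"
    and unext: "\<And>y. (y, hd xs) \<in> E \<Longrightarrow> y \<in> set xs"
  shows "degree V E (hd xs) = 1"
proof -
  have sg: "simple_graph V E" and acyc: "\<nexists>ys. is_cycle E ys" using tree unfolding is_tree_def by auto
  have sym: "sym E" and EV: "E \<subseteq> V \<times> V" and irr: "\<And>v. (v, v) \<notin> E"
    using sg unfolding simple_graph_def by auto
  have h0: "hd xs = xs ! 0" using len by (cases xs) auto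
  have "neighbors V E (hd xs) = {xs ! 1}"
  proof
    show "{xs ! 1} \<subseteq> neighbors V E (hd xs)"
      using walk_nth[OF w, of 0] len EV h0 unfolding neighbors_def by auto
    show "neighbors V E (hd xs) \<subseteq> {xs ! 1}"
    proof
      fix y assume "y \<in> neighbors V E (hd xs)"
      then have e: "(y, hd xs) \<in> E" using sym unfolding neighbors_def by (auto dest: symD)
      then obtain j where j: "j < length xs" "xs ! j = y" using unext by (metis in_set_conv_nth)
      have "j \<noteq> 0"
      proof
        assume "j = 0"
        then have "(xs ! 0, xs ! 0) \<in> E" using e j h0 by simp
        with irr show False by blast
      qed
      moreover have "\<not> 2 \<le> j"
      proof
        assume "2 \<le> j"
        moreover have "last (take (Suc j) xs) = y" "hd (take (Suc j) xs) = hd xs"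
          using j by (simp add: take_Suc_conv_app_nth, simp add: hd_take)
        ultimately have "is_cycle E (take (Suc j) xs)"
          using walk_take[OF w] d j e unfolding is_cycle_def by simp
        with acyc show False by blast
      qed
      ultimately have "j = 1" by simp
      then show "y \<in> {xs ! 1}" using j by simp
    qed
  qed
  then show ?thesis unfolding degree_eq_card_neighbors by simp
qed

lemma path_extends_to_pendants:
  assumes tree: "is_tree V E"
    and Q_Cons: "\<And>xs y. Q xs \<Longrightarrow> Q (y # xs)" and Q_snoc: "\<And>xs y. Q xs \<Longrightarrow> Q (xs @ [y])"
    and w0: "walk E xs0" and d0: "distinct xs0" and l0: "2 \<le> length xs0" and q0: "Q xs0"
  obtains xs where "is_path E (hd xs) (last xs) xs" "hd xs \<noteq> last xs" "Q xs"
    "hd xs \<in> pendant_vertices V E" "last xs \<in> pendant_vertices V E"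
proof -
  have sg: "simple_graph V E" using tree unfolding is_tree_def by auto
  have sym: "sym E" and EV: "E \<subseteq> V \<times> V" and fin: "finite V"
    using sg unfolding simple_graph_def by auto
  define P where "P n \<longleftrightarrow> (\<exists>xs. length xs = n \<and> 2 \<le> n \<and> walk E xs \<and> distinct xs \<and> Q xs)" for n
  have bound: "n < Suc (card V)" if "P n" for n
  proof -
    from that obtain xs where xs: "length xs = n" "2 \<le> n" "walk E xs" "distinct xs"
      unfolding P_def by blast
    have "set xs \<subseteq> V" using walk_set_subset[OF xs(3) walk_hd_mem[OF xs(3) _ EV] EV] xs by simp
    then show ?thesis using card_mono[OF fin, of "set xs"] distinct_card[OF xs(4)] xs(1) by simp
  qed
  have "P (length xs0)" unfolding P_def using w0 d0 l0 q0 by blast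
  then obtain n where n: "P n" and nmax: "\<And>m. P m \<Longrightarrow> m \<le> n"
    using ex_has_greatest_nat[of P _ "\<lambda>x. x" "Suc (card V)"] bound by blast
  from n obtain xs where xs: "length xs = n" "2 \<le> n" "walk E xs" "distinct xs" "Q xs"
    unfolding P_def by blast
  have ne: "xs \<noteq> []" using xs by auto
  have "degree V E (hd xs) = 1"
  proof (rule pendant_if_unextendable[OF tree xs(3,4)])
    fix y assume e: "(y, hd xs) \<in> E"
    have "P (Suc n)" if "y \<notin> set xs"
      unfolding P_def using that xs walk_Cons[OF xs(3) e] Q_Cons[OF xs(5)]
      by (intro exI[of _ "y # xs"]) simp
    then show "y \<in> set xs" using nmax[of "Suc n"] by linarith
  qed (use xs in simp)
  moreover have "degree V E (hd (rev xs)) = 1"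
  proof (rule pendant_if_unextendable[OF tree walk_rev[OF sym xs(3)]])
    fix y assume "(y, hd (rev xs)) \<in> E"
    then have e: "(last xs, y) \<in> E" using sym ne by (simp add: hd_rev symD)
    have "P (Suc n)" if "y \<notin> set xs"
      unfolding P_def using that xs walk_snoc[OF xs(3) e] Q_snoc[OF xs(5)]
      by (intro exI[of _ "xs @ [y]"]) simp
    then show "y \<in> set (rev xs)" using nmax[of "Suc n"] by auto
  qed (use xs in simp_all)
  moreover have "set xs \<subseteq> V"
    using walk_set_subset[OF xs(3) walk_hd_mem[OF xs(3) _ EV] EV] xs by simp
  ultimately have "hd xs \<in> pendant_vertices V E" "last xs \<in> pendant_vertices V E"
    using ne unfolding pendant_vertices_def by (auto simp: hd_rev)
  moreover have "is_path E (hd xs) (last xs) xs" using xs unfolding is_path_def by simp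
  ultimately show ?thesis using that hd_neq_last_of_distinct[OF xs(4)] xs by simp
qed

section \<open>Spanned subtrees\<close>

definition subtree_verts :: "('a \<times> 'a) set \<Rightarrow> 'a set \<Rightarrow> 'a set" where
  "subtree_verts E U = \<Union>{path_verts E r s | r s. r \<in> U \<and> s \<in> U \<and> r \<noteq> s}"

definition subtree_edges :: "('a \<times> 'a) set \<Rightarrow> 'a set \<Rightarrow> ('a \<times> 'a) set" where
  "subtree_edges E U = \<Union>{path_edges E r s | r s. r \<in> U \<and> s \<in> U \<and> r \<noteq> s}"

lemma mem_subtree_verts_iff:
  "v \<in> subtree_verts E U \<longleftrightarrow> (\<exists>r s xs. r \<in> U \<and> s \<in> U \<and> r \<noteq> s \<and> is_path E r s xs \<and> v \<in> set xs)"
  unfolding subtree_verts_def path_verts_def by blast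

lemma mem_subtree_edges_iff:
  "e \<in> subtree_edges E U \<longleftrightarrow> (\<exists>r s xs i. r \<in> U \<and> s \<in> U \<and> r \<noteq> s \<and> is_path E r s xs \<and>
     Suc i < length xs \<and> (e = (xs ! i, xs ! Suc i) \<or> e = (xs ! Suc i, xs ! i)))"
  unfolding subtree_edges_def path_edges_def by blast

lemma subtree_verts_subset:
  assumes "simple_graph V E" "U \<subseteq> V"
  shows "subtree_verts E U \<subseteq> V"
proof
  fix v assume "v \<in> subtree_verts E U"
  then obtain r s xs where "r \<in> U" "is_path E r s xs" "v \<in> set xs"
    unfolding mem_subtree_verts_iff by blast
  then show "v \<in> V" using path_set_subset[OF assms(1)] assms(2) by blast
qed

lemma subtree_edges_subset:
  assumes "simple_graph V E"
  shows "subtree_edges E U \<subseteq> E"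
proof
  fix e assume "e \<in> subtree_edges E U"
  then obtain r s xs i where "is_path E r s xs" "Suc i < length xs"
    "e = (xs ! i, xs ! Suc i) \<or> e = (xs ! Suc i, xs ! i)"
    unfolding mem_subtree_edges_iff by blast
  moreover have "sym E" using assms unfolding simple_graph_def by simp
  ultimately show "e \<in> E" unfolding is_path_def by (auto dest: walk_nth symD)
qed

lemma simple_graph_subtree:
  assumes sg: "simple_graph V E" and UV: "U \<subseteq> V"
  shows "simple_graph (subtree_verts E U) (subtree_edges E U)"
proof -
  have "subtree_edges E U \<subseteq> subtree_verts E U \<times> subtree_verts E U"
  proof
    fix e assume "e \<in> subtree_edges E U"
    then obtain r s xs i where "r \<in> U" "s \<in> U" "r \<noteq> s" "is_path E r s xs" "Suc i < length xs"
      "e = (xs ! i, xs ! Suc i) \<or> e = (xs ! Suc i, xs ! i)"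
      unfolding mem_subtree_edges_iff by blast
    moreover have "xs ! i \<in> set xs" "xs ! Suc i \<in> set xs" using \<open>Suc i < length xs\<close> by auto
    ultimately have "xs ! i \<in> subtree_verts E U" "xs ! Suc i \<in> subtree_verts E U"
      unfolding mem_subtree_verts_iff by blast+
    then show "e \<in> subtree_verts E U \<times> subtree_verts E U"
      using \<open>e = (xs ! i, xs ! Suc i) \<or> e = (xs ! Suc i, xs ! i)\<close> by auto
  qed
  moreover have "sym (subtree_edges E U)" unfolding sym_def mem_subtree_edges_iff by blast
  moreover have "finite (subtree_verts E U)"
    using subtree_verts_subset[OF sg UV] sg unfolding simple_graph_def by (auto intro: finite_subset)
  moreover have "(v, v) \<notin> subtree_edges E U" for v
    using subtree_edges_subset[OF sg, of U] sg unfolding simple_graph_def by auto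
  ultimately show ?thesis unfolding simple_graph_def by blast
qed

lemma subtree_pendant_vertices:
  assumes tree: "is_tree V E" and two: "2 \<le> card (pendant_vertices V E)"
  shows "subtree_verts E (pendant_vertices V E) = V" "subtree_edges E (pendant_vertices V E) = E"
proof -
  have sg: "simple_graph V E" and con: "connected_graph V E" using tree unfolding is_tree_def by auto
  have PV: "pendant_vertices V E \<subseteq> V" unfolding pendant_vertices_def by auto
  show "subtree_verts E (pendant_vertices V E) = V"
  proof
    show "subtree_verts E (pendant_vertices V E) \<subseteq> V" by (rule subtree_verts_subset[OF sg PV])
    show "V \<subseteq> subtree_verts E (pendant_vertices V E)"
    proof
      fix v assume v: "v \<in> V"
      obtain s where s: "s \<in> pendant_vertices V E" "s \<noteq> v"
        using card_ge_2_ex_neq[OF two] by blast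
      then obtain xs0 where p0: "is_path E v s xs0"
        using con v PV unfolding connected_graph_def by blast
      then have "walk E xs0" "distinct xs0" "2 \<le> length xs0" "v \<in> set xs0"
        using path_length_ge_2[OF p0] s(2) unfolding is_path_def by (auto intro: hd_in_set)
      then obtain xs where "is_path E (hd xs) (last xs) xs" "hd xs \<noteq> last xs" "v \<in> set xs"
        "hd xs \<in> pendant_vertices V E" "last xs \<in> pendant_vertices V E"
        using path_extends_to_pendants[OF tree, of "\<lambda>xs. v \<in> set xs"] by auto
      then show "v \<in> subtree_verts E (pendant_vertices V E)"
        unfolding mem_subtree_verts_iff by blast
    qed
  qed
  show "subtree_edges E (pendant_vertices V E) = E"
  proof
    show "subtree_edges E (pendant_vertices V E) \<subseteq> E" by (rule subtree_edges_subset[OF sg])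
    show "E \<subseteq> subtree_edges E (pendant_vertices V E)"
    proof
      fix e assume e: "e \<in> E"
      obtain a b where ab: "e = (a, b)" by (cases e)
      let ?Q = "\<lambda>xs. \<exists>i. Suc i < length xs \<and> xs ! i = a \<and> xs ! Suc i = b"
      have Q_Cons: "?Q (y # xs)" if "?Q xs" for xs y
        using that by (metis Suc_less_eq length_Cons nth_Cons_Suc)
      have Q_snoc: "?Q (xs @ [y])" if "?Q xs" for xs y
        using that by (metis Suc_lessD length_append_singleton less_SucI nth_append)
      have "a \<noteq> b" using e ab sg unfolding simple_graph_def by auto
      moreover have "walk E [a, b]" using e ab by simp
      ultimately obtain xs where "is_path E (hd xs) (last xs) xs" "hd xs \<noteq> last xs" "?Q xs"
        "hd xs \<in> pendant_vertices V E" "last xs \<in> pendant_vertices V E"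
        using path_extends_to_pendants[OF tree, of ?Q "[a, b]", OF Q_Cons Q_snoc] by auto
      then show "e \<in> subtree_edges E (pendant_vertices V E)"
        unfolding mem_subtree_edges_iff ab by blast
    qed
  qed
qed

lemma subtree_edges_avoiding_pendant:
  assumes sg: "simple_graph V E" and deg: "degree V E u = 1" and u: "u \<notin> U"
  shows "subtree_verts (edges_avoiding E u) U = subtree_verts E U"
    "subtree_edges (edges_avoiding E u) U = subtree_edges E U"
proof -
  have "is_path (edges_avoiding E u) r s = is_path E r s" if "r \<in> U" "s \<in> U" for r s
    using is_path_edges_avoiding_pendant_iff[OF sg deg, of r s] that u by auto
  then have "path_verts (edges_avoiding E u) r s = path_verts E r s"
    "path_edges (edges_avoiding E u) r s = path_edges E r s" if "r \<in> U" "s \<in> U" for r s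
    using that unfolding path_verts_def path_edges_def by simp_all
  then show "subtree_verts (edges_avoiding E u) U = subtree_verts E U"
    "subtree_edges (edges_avoiding E u) U = subtree_edges E U"
    unfolding subtree_verts_def subtree_edges_def by (metis (no_types, lifting))+
qed

section \<open>Laplacian eigenvectors\<close>

definition lap_eigenfun :: "'a set \<Rightarrow> ('a \<times> 'a) set \<Rightarrow> 'b::field \<Rightarrow> ('a \<Rightarrow> 'b) \<Rightarrow> bool" where
  "lap_eigenfun V E lam x \<longleftrightarrow>
     (\<forall>v\<in>V. of_nat (degree V E v) * x v - sum x (neighbors V E v) = lam * x v)"

lemma lap_eigenfun_cong:
  "(\<And>v. v \<in> V \<Longrightarrow> x v = y v) \<Longrightarrow> lap_eigenfun V E lam x \<longleftrightarrow> lap_eigenfun V E lam y"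
  unfolding lap_eigenfun_def neighbors_def by (auto intro!: sum.cong)

lemma lap_eigenfun_pendant_neighbor:
  assumes "lap_eigenfun V E lam x" "u \<in> V" "degree V E u = 1" "neighbors V E u = {w}" "x u = 0"
  shows "x w = 0"
proof -
  have "of_nat (degree V E u) * x u - sum x (neighbors V E u) = lam * x u"
    using assms(1,2) unfolding lap_eigenfun_def by blast
  then show ?thesis using assms(3-5) by simp
qed

lemma lap_eigenfun_delete_pendant:
  assumes sg: "simple_graph V E" and ev: "lap_eigenfun V E lam x"
    and u: "u \<in> V" "degree V E u = 1" and xu: "x u = 0"
  shows "lap_eigenfun (V - {u}) (edges_avoiding E u) lam x"
  unfolding lap_eigenfun_def
proof
  fix v assume v: "v \<in> V - {u}"
  obtain w where w: "neighbors V E u = {w}" using pendant_neighbor[OF u(2)] .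
  have xw: "x w = 0" by (rule lap_eigenfun_pendant_neighbor[OF ev u w xu])
  have N: "neighbors (V - {u}) (edges_avoiding E u) v = neighbors V E v - {u}"
    using v by (simp add: neighbors_edges_avoiding)
  have sum_eq: "sum x (neighbors V E v - {u}) = sum x (neighbors V E v)"
    using xu finite_neighbors[OF sg] by (simp add: sum_diff1)
  have deg_eq: "of_nat (card (neighbors V E v - {u})) * x v = of_nat (degree V E v) * x v"
  proof (cases "u \<in> neighbors V E v")
    case True
    have "sym E" "E \<subseteq> V \<times> V" using sg unfolding simple_graph_def by auto
    then have "v \<in> neighbors V E u" using True v unfolding neighbors_def by (auto dest: symD)
    then have "x v = 0" using w xw by simp
    then show ?thesis by simp
  next
    case False
    then show ?thesis by (simp add: degree_eq_card_neighbors)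
  qed
  have "of_nat (degree (V - {u}) (edges_avoiding E u) v) * x v
      - sum x (neighbors (V - {u}) (edges_avoiding E u) v)
      = of_nat (degree V E v) * x v - sum x (neighbors V E v)"
    unfolding degree_eq_card_neighbors[of "V - {u}"] N deg_eq sum_eq ..
  also have "\<dots> = lam * x v"
    using ev v unfolding lap_eigenfun_def by blast
  finally show "of_nat (degree (V - {u}) (edges_avoiding E u) v) * x v
      - sum x (neighbors (V - {u}) (edges_avoiding E u) v) = lam * x v" .
qed

lemma pendant_vertices_delete_pendant:
  assumes sg: "simple_graph V E" and w: "neighbors V E u = {w}"
  shows "pendant_vertices (V - {u}) (edges_avoiding E u) \<subseteq> insert w (pendant_vertices V E)"
proof
  fix v assume v: "v \<in> pendant_vertices (V - {u}) (edges_avoiding E u)"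
  show "v \<in> insert w (pendant_vertices V E)"
  proof (cases "v = w")
    case False
    have "u \<notin> neighbors V E v"
      using False v sg w unfolding simple_graph_def neighbors_def pendant_vertices_def by (auto dest: symD)
    then show ?thesis
      using v neighbors_edges_avoiding[of v u V E]
      unfolding pendant_vertices_def degree_eq_card_neighbors by auto
  qed simp
qed

lemma pendant_vertices_delete_other_pendant:
  assumes tree: "is_tree V E" and du: "degree V E u = 1"
    and a: "a \<in> pendant_vertices V E" "a \<noteq> u" and b: "b \<in> V" "b \<noteq> a" "b \<noteq> u"
  shows "a \<in> pendant_vertices (V - {u}) (edges_avoiding E u)"
proof -
  have "a \<in> V" "degree V E a = 1" using a unfolding pendant_vertices_def by auto
  then have "(a, u) \<notin> E" using pendants_not_adjacent[OF tree _ du b] a(2) by blast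
  then have "neighbors (V - {u}) (edges_avoiding E u) a = neighbors V E a"
    using neighbors_edges_avoiding[OF a(2)] unfolding neighbors_def by auto
  then show ?thesis using a unfolding pendant_vertices_def degree_eq_card_neighbors by auto
qed

lemma lap_eigenfun_prune_to_subtree:
  fixes x :: "'a \<Rightarrow> 'b::field"
  assumes "is_tree V E" "U \<subseteq> pendant_vertices V E" "2 \<le> card U" "lap_eigenfun V E lam x"
    "\<forall>u\<in>pendant_vertices V E - U. x u = 0"
  shows "(\<forall>v\<in>V - subtree_verts E U. x v = 0) \<and> lap_eigenfun (subtree_verts E U) (subtree_edges E U) lam x"
  using assms
proof (induction "card V" arbitrary: V E rule: less_induct)
  case less
  have tree: "is_tree V E" and UP: "U \<subseteq> pendant_vertices V E" and two: "2 \<le> card U"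
    and ev: "lap_eigenfun V E lam x" and zero: "\<forall>u\<in>pendant_vertices V E - U. x u = 0"
    using less.prems by auto
  have sg: "simple_graph V E" using tree unfolding is_tree_def by auto
  have UV: "U \<subseteq> V" using UP unfolding pendant_vertices_def by auto
  show ?case
  proof (cases "pendant_vertices V E \<subseteq> U")
    case True
    then have "U = pendant_vertices V E" using UP by blast
    then show ?thesis using subtree_pendant_vertices[OF tree] two ev by simp
  next
    case False
    then obtain u where u: "u \<in> pendant_vertices V E" "u \<notin> U" by blast
    then have uV: "u \<in> V" and du: "degree V E u = 1" and xu: "x u = 0"
      using zero unfolding pendant_vertices_def by auto
    obtain w where w: "neighbors V E u = {w}" using pendant_neighbor[OF du] .
    have xw: "x w = 0" by (rule lap_eigenfun_pendant_neighbor[OF ev uV du w xu])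
    obtain a where a: "a \<in> U" using card_ge_2_ex_neq[OF two] by blast
    have tree': "is_tree (V - {u}) (edges_avoiding E u)"
      using is_tree_delete_pendant[OF tree du, of a] a UV u(2) by blast
    have "finite V" using sg unfolding simple_graph_def by simp
    then have card': "card (V - {u}) < card V" using uV by (rule card_Diff1_less)
    have UP': "U \<subseteq> pendant_vertices (V - {u}) (edges_avoiding E u)"
    proof
      fix b assume b: "b \<in> U"
      obtain c where "c \<in> U" "c \<noteq> b" using card_ge_2_ex_neq[OF two] by blast
      then show "b \<in> pendant_vertices (V - {u}) (edges_avoiding E u)"
        using pendant_vertices_delete_other_pendant[OF tree du, of b c] b UP UV u(2) by blast
    qed
    have ev': "lap_eigenfun (V - {u}) (edges_avoiding E u) lam x"
      by (rule lap_eigenfun_delete_pendant[OF sg ev uV du xu])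
    have zero': "\<forall>v\<in>pendant_vertices (V - {u}) (edges_avoiding E u) - U. x v = 0"
      using pendant_vertices_delete_pendant[OF sg w] zero xw by blast
    from less.hyps[OF card' tree' UP' two ev' zero'] show ?thesis
      using subtree_edges_avoiding_pendant[OF sg du u(2)] xu by auto
  qed
qed

lemma
  assumes "finite V"
  shows distinct_vlist: "distinct (vlist V)" and set_vlist: "set (vlist V) = V"
    and length_vlist: "length (vlist V) = card V"
proof -
  obtain xs where "distinct xs \<and> set xs = V" using finite_distinct_list[OF assms] by blast
  then have "distinct (vlist V) \<and> set (vlist V) = V" unfolding vlist_def by (rule someI)
  then show "distinct (vlist V)" "set (vlist V) = V" "length (vlist V) = card V"
    using distinct_card by fastforce+
qed

lemma vlist_nth_mem: "finite V \<Longrightarrow> i < card V \<Longrightarrow> vlist V ! i \<in> V"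
  using set_vlist length_vlist by (metis nth_mem)

lemma vlist_nth_eq_iff: "finite V \<Longrightarrow> i < card V \<Longrightarrow> j < card V \<Longrightarrow> vlist V ! i = vlist V ! j \<longleftrightarrow> i = j"
  using distinct_vlist length_vlist by (metis nth_eq_iff_index_eq)

definition vindex :: "'a set \<Rightarrow> 'a \<Rightarrow> nat" where
  "vindex V a = (THE i. i < card V \<and> vlist V ! i = a)"

lemma
  assumes "finite V" "a \<in> V"
  shows vindex_less: "vindex V a < card V" and vlist_nth_vindex: "vlist V ! vindex V a = a"
proof -
  obtain i where "i < card V" "vlist V ! i = a"
    using assms set_vlist length_vlist by (metis in_set_conv_nth)
  then have "\<exists>!i. i < card V \<and> vlist V ! i = a" using vlist_nth_eq_iff[OF assms(1)] by blast
  then have "vindex V a < card V \<and> vlist V ! vindex V a = a" unfolding vindex_def by (rule theI')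
  then show "vindex V a < card V" "vlist V ! vindex V a = a" by auto
qed

lemma vindex_vlist_nth: "finite V \<Longrightarrow> i < card V \<Longrightarrow> vindex V (vlist V ! i) = i"
  using vindex_less vlist_nth_vindex vlist_nth_mem vlist_nth_eq_iff by metis

lemma sum_vlist_nth: "finite V \<Longrightarrow> (\<Sum>i = 0..<card V. g (vlist V ! i)) = (\<Sum>a\<in>V. g a)"
  by (rule sum.reindex_bij_witness[of _ "vindex V" "\<lambda>i. vlist V ! i"])
    (auto simp: vindex_less vlist_nth_vindex vindex_vlist_nth vlist_nth_mem)

definition fun_of_vec :: "'a set \<Rightarrow> 'b::zero vec \<Rightarrow> 'a \<Rightarrow> 'b" where
  "fun_of_vec V v a = (if a \<in> V then v $ vindex V a else 0)"

lemma fun_of_vec_vlist_nth: "finite V \<Longrightarrow> i < card V \<Longrightarrow> fun_of_vec V v (vlist V ! i) = v $ i"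
  unfolding fun_of_vec_def by (simp add: vlist_nth_mem vindex_vlist_nth)

lemma eq_zero_vec_iff_fun_of_vec:
  assumes "finite V" "v \<in> carrier_vec (card V)"
  shows "v = 0\<^sub>v (card V) \<longleftrightarrow> (\<forall>a\<in>V. fun_of_vec V v a = 0)"
proof
  assume "\<forall>a\<in>V. fun_of_vec V v a = 0"
  then show "v = 0\<^sub>v (card V)"
    using assms fun_of_vec_vlist_nth[OF assms(1), of _ v] vlist_nth_mem[OF assms(1)]
    by (intro eq_vecI) auto
qed (simp add: fun_of_vec_def assms vindex_less)

definition restrict_mat :: "'a set \<Rightarrow> 'a set \<Rightarrow> 'b::comm_ring_1 mat" where
  "restrict_mat W V = mat (card W) (card V) (\<lambda>(k, i). if vlist V ! i = vlist W ! k then 1 else 0)"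

lemma restrict_mat_carrier: "restrict_mat W V \<in> carrier_mat (card W) (card V)"
  unfolding restrict_mat_def by simp

lemma fun_of_vec_restrict_mat:
  assumes V: "finite V" and WV: "W \<subseteq> V" and v: "v \<in> carrier_vec (card V)" and a: "a \<in> W"
  shows "fun_of_vec W (restrict_mat W V *\<^sub>v v) a = fun_of_vec V v a"
proof -
  have W: "finite W" using V WV finite_subset by blast
  let ?k = "vindex W a"
  have "(restrict_mat W V *\<^sub>v v) $ ?k = (\<Sum>i = 0..<card V. (if vlist V ! i = a then 1 else 0) * v $ i)"
    using v vindex_less[OF W a] vlist_nth_vindex[OF W a]
    by (simp add: restrict_mat_def scalar_prod_def)
  also have "\<dots> = (\<Sum>i = 0..<card V. (\<lambda>b. if b = a then fun_of_vec V v b else 0) (vlist V ! i))"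
    by (rule sum.cong) (auto simp: fun_of_vec_vlist_nth[OF V])
  also have "\<dots> = (\<Sum>b\<in>V. if b = a then fun_of_vec V v b else 0)"
    by (rule sum_vlist_nth[OF V])
  also have "\<dots> = fun_of_vec V v a" using V a WV by auto
  finally show ?thesis using a unfolding fun_of_vec_def[of W] by simp
qed

lemma restrict_mat_mult_eq_0_iff:
  fixes v :: "'b::comm_ring_1 vec"
  assumes V: "finite V" and WV: "W \<subseteq> V" and v: "v \<in> carrier_vec (card V)"
  shows "restrict_mat W V *\<^sub>v v = 0\<^sub>v (card W) \<longleftrightarrow> (\<forall>a\<in>W. fun_of_vec V v a = 0)"
proof -
  have "finite W" using V WV finite_subset by blast
  moreover have "restrict_mat W V *\<^sub>v v \<in> carrier_vec (card W)"
    using restrict_mat_carrier v by (rule mult_mat_vec_carrier)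
  ultimately show ?thesis
    by (simp add: eq_zero_vec_iff_fun_of_vec fun_of_vec_restrict_mat[OF V WV v])
qed

text \<open>L(G) - lam, taken over the complex numbers so that the Jordan normal form is available.\<close>
definition lap_char_matrix :: "'a set \<Rightarrow> ('a \<times> 'a) set \<Rightarrow> real \<Rightarrow> complex mat" where
  "lap_char_matrix V E lam = char_matrix (map_mat complex_of_real (laplacian V E)) (complex_of_real lam)"

lemma laplacian_carrier: "laplacian V E \<in> carrier_mat (card V) (card V)"
  unfolding laplacian_def by simp

lemma lap_char_matrix_carrier: "lap_char_matrix V E lam \<in> carrier_mat (card V) (card V)"
  unfolding lap_char_matrix_def laplacian_def char_matrix_def by simp

lemma lap_char_matrix_index:
  "i < card V \<Longrightarrow> j < card V \<Longrightarrow> lap_char_matrix V E lam $$ (i, j) =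
     (if i = j then of_nat (degree V E (vlist V ! i)) - of_real lam
      else if (vlist V ! i, vlist V ! j) \<in> E then -1 else 0)"
  unfolding lap_char_matrix_def char_matrix_def laplacian_def by simp

lemma lap_char_matrix_mult_vec:
  assumes sg: "simple_graph V E" and v: "v \<in> carrier_vec (card V)" and a: "a \<in> V"
  shows "(lap_char_matrix V E lam *\<^sub>v v) $ vindex V a =
    of_nat (degree V E a) * fun_of_vec V v a - sum (fun_of_vec V v) (neighbors V E a) - of_real lam * fun_of_vec V v a"
proof -
  have V: "finite V" and irr: "(a, a) \<notin> E" using sg unfolding simple_graph_def by auto
  let ?i = "vindex V a" and ?x = "fun_of_vec V v"
  define g where "g b = (if b = a then of_nat (degree V E a) - of_real lam else if (a, b) \<in> E then -1 else 0) * ?x b" for b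
  have i: "?i < card V" "vlist V ! ?i = a" using vindex_less[OF V a] vlist_nth_vindex[OF V a] by auto
  have "(lap_char_matrix V E lam *\<^sub>v v) $ ?i = (\<Sum>j = 0..<card V. lap_char_matrix V E lam $$ (?i, j) * v $ j)"
    using v i lap_char_matrix_carrier[of V E lam] by (simp add: scalar_prod_def)
  also have "\<dots> = (\<Sum>j = 0..<card V. g (vlist V ! j))"
    using i by (intro sum.cong) (auto simp: g_def lap_char_matrix_index fun_of_vec_vlist_nth[OF V] vlist_nth_eq_iff[OF V])
  also have "\<dots> = (\<Sum>b\<in>V. g b)" by (rule sum_vlist_nth[OF V])
  also have "\<dots> = (\<Sum>b\<in>V. (if b = a then (of_nat (degree V E a) - of_real lam) * ?x a else 0)
      - (if b \<in> neighbors V E a then ?x b else 0))"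
    using irr by (intro sum.cong) (auto simp: g_def neighbors_def)
  also have "\<dots> = (of_nat (degree V E a) - of_real lam) * ?x a - sum ?x (neighbors V E a)"
    using V a by (simp add: sum_subtractf sum.If_cases neighbors_def Int_def)
  finally show ?thesis by (simp add: algebra_simps)
qed

lemma mat_kernel_lap_char_matrix_iff:
  assumes sg: "simple_graph V E" and v: "v \<in> carrier_vec (card V)"
  shows "v \<in> mat_kernel (lap_char_matrix V E lam) \<longleftrightarrow> lap_eigenfun V E (of_real lam) (fun_of_vec V v)"
proof -
  have V: "finite V" using sg unfolding simple_graph_def by simp
  have Mv: "lap_char_matrix V E lam *\<^sub>v v \<in> carrier_vec (card V)"
    using lap_char_matrix_carrier v by (rule mult_mat_vec_carrier)
  have "v \<in> mat_kernel (lap_char_matrix V E lam) \<longleftrightarrow> lap_char_matrix V E lam *\<^sub>v v = 0\<^sub>v (card V)"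
    using v lap_char_matrix_carrier[of V E lam] unfolding mat_kernel_def by auto
  also have "\<dots> \<longleftrightarrow> (\<forall>a\<in>V. (lap_char_matrix V E lam *\<^sub>v v) $ vindex V a = 0)"
    unfolding eq_zero_vec_iff_fun_of_vec[OF V Mv] fun_of_vec_def by simp
  also have "\<dots> \<longleftrightarrow> lap_eigenfun V E (of_real lam) (fun_of_vec V v)"
    unfolding lap_eigenfun_def by (simp add: lap_char_matrix_mult_vec[OF sg v])
  finally show ?thesis .
qed

lemma transpose_lap_char_matrix:
  assumes "sym E"
  shows "transpose_mat (lap_char_matrix V E lam) = map_mat cnj (lap_char_matrix V E lam)"
  using assms lap_char_matrix_carrier[of V E lam]
  by (intro eq_matI) (auto simp: lap_char_matrix_index dest: symD)

lemma lap_mult_eq_kernel_dim: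
  assumes "simple_graph V E"
  shows "lap_mult V E lam = kernel_dim (lap_char_matrix V E lam)"
proof -
  let ?A = "map_mat complex_of_real (laplacian V E)"
  have A: "?A \<in> carrier_mat (card V) (card V)" using laplacian_carrier[of V E] by simp
  have "sym E" using assms unfolding simple_graph_def by simp
  then have ker: "mat_kernel (char_matrix ?A (of_real lam) * char_matrix ?A (of_real lam))
      = mat_kernel (char_matrix ?A (of_real lam))"
    using mat_kernel_mult_self_hermitian[OF lap_char_matrix_carrier transpose_lap_char_matrix]
    unfolding lap_char_matrix_def by blast
  have "lap_mult V E lam = Polynomial.order (of_real lam) (char_poly ?A)"
    unfolding lap_mult_def by (rule order_char_poly_of_real[OF laplacian_carrier, symmetric])
  also have "\<dots> = kernel_dim (lap_char_matrix V E lam)"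
    unfolding lap_char_matrix_def by (rule order_char_poly_eq_kernel_dim[OF A ker])
  finally show ?thesis .
qed

lemma kernel_dim_le_lap_mult: "kernel_dim (lap_char_matrix V E lam) \<le> lap_mult V E lam"
proof -
  let ?A = "map_mat complex_of_real (laplacian V E)"
  have "kernel_dim (lap_char_matrix V E lam) \<le> Polynomial.order (of_real lam) (char_poly ?A)"
    unfolding lap_char_matrix_def
    by (rule kernel_dim_char_matrix_le_order[of _ "card V"]) (simp add: laplacian_carrier)
  then show ?thesis
    unfolding lap_mult_def order_char_poly_of_real[OF laplacian_carrier[of V E]] .
qed

section \<open>Restriction to the spanned subtree\<close>

lemma mat_kernel_restrict_subtree:
  assumes tree: "is_tree V E" and UP: "U \<subseteq> pendant_vertices V E" and two: "2 \<le> card U"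
    and v: "v \<in> mat_kernel (lap_char_matrix V E lam @\<^sub>r restrict_mat (pendant_vertices V E - U) V)"
  shows "\<forall>a\<in>V - subtree_verts E U. fun_of_vec V v a = 0"
    and "restrict_mat (subtree_verts E U) V *\<^sub>v v
           \<in> mat_kernel (lap_char_matrix (subtree_verts E U) (subtree_edges E U) lam)"
proof -
  let ?P = "pendant_vertices V E" and ?H = "subtree_verts E U"
  have sg: "simple_graph V E" using tree unfolding is_tree_def by simp
  have V: "finite V" using sg unfolding simple_graph_def by simp
  have PV: "?P \<subseteq> V" unfolding pendant_vertices_def by auto
  have HV: "?H \<subseteq> V" using subtree_verts_subset[OF sg] UP PV by blast
  have ker: "v \<in> mat_kernel (lap_char_matrix V E lam)"
    and "restrict_mat (?P - U) V *\<^sub>v v = 0\<^sub>v (card (?P - U))"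
    using v unfolding mat_kernel_append_rows[OF lap_char_matrix_carrier restrict_mat_carrier] by auto
  moreover have v_carrier: "v \<in> carrier_vec (card V)"
    using mat_kernelD(1)[OF lap_char_matrix_carrier ker] .
  ultimately have "lap_eigenfun V E (of_real lam) (fun_of_vec V v)"
    "\<forall>u\<in>?P - U. fun_of_vec V v u = 0"
    using mat_kernel_lap_char_matrix_iff[OF sg] restrict_mat_mult_eq_0_iff[OF V _ v_carrier, of "?P - U"] PV
    by auto
  then have prune: "(\<forall>a\<in>V - ?H. fun_of_vec V v a = 0)"
      "lap_eigenfun ?H (subtree_edges E U) (of_real lam) (fun_of_vec V v)"
    using lap_eigenfun_prune_to_subtree[OF tree UP two] by auto
  then show "\<forall>a\<in>V - ?H. fun_of_vec V v a = 0" by blast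
  have "lap_eigenfun ?H (subtree_edges E U) (of_real lam) (fun_of_vec ?H (restrict_mat ?H V *\<^sub>v v))"
    using prune(2) lap_eigenfun_cong fun_of_vec_restrict_mat[OF V HV v_carrier] by blast
  moreover have "restrict_mat ?H V *\<^sub>v v \<in> carrier_vec (card ?H)"
    using restrict_mat_carrier v_carrier by (rule mult_mat_vec_carrier)
  ultimately show "restrict_mat ?H V *\<^sub>v v \<in> mat_kernel (lap_char_matrix ?H (subtree_edges E U) lam)"
    using mat_kernel_lap_char_matrix_iff[OF simple_graph_subtree[OF sg]] UP PV by blast
qed

theorem lap_mult_le_subtree:
  assumes tree: "is_tree V E" and UP: "U \<subseteq> pendant_vertices V E" and two: "2 \<le> card U"
  shows "lap_mult V E lam
    \<le> lap_mult (subtree_verts E U) (subtree_edges E U) lam + card (pendant_vertices V E - U)"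
proof -
  let ?P = "pendant_vertices V E" and ?H = "subtree_verts E U" and ?HE = "subtree_edges E U"
  let ?C = "restrict_mat (?P - U) V :: complex mat" and ?R = "restrict_mat ?H V :: complex mat"
  let ?A = "lap_char_matrix V E lam" and ?B = "lap_char_matrix ?H ?HE lam"
  have sg: "simple_graph V E" using tree unfolding is_tree_def by simp
  have V: "finite V" using sg unfolding simple_graph_def by simp
  have HV: "?H \<subseteq> V" using subtree_verts_subset[OF sg] UP unfolding pendant_vertices_def by blast
  have AC: "?A @\<^sub>r ?C \<in> carrier_mat (card V + card (?P - U)) (card V)"
    using lap_char_matrix_carrier restrict_mat_carrier by blast
  have inj: "v = 0\<^sub>v (card V)" if v: "v \<in> mat_kernel (?A @\<^sub>r ?C)" and "?R *\<^sub>v v = 0\<^sub>v (card ?H)" for v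
  proof -
    have "v \<in> carrier_vec (card V)" using mat_kernelD(1)[OF AC v] .
    then show ?thesis
      using that mat_kernel_restrict_subtree(1)[OF tree UP two v]
      by (auto simp: eq_zero_vec_iff_fun_of_vec[OF V] restrict_mat_mult_eq_0_iff[OF V HV])
  qed
  have "lap_mult V E lam = kernel_dim ?A" by (rule lap_mult_eq_kernel_dim[OF sg])
  also have "\<dots> \<le> kernel_dim (?A @\<^sub>r ?C) + card (?P - U)"
    by (rule kernel_dim_le_append_rows[OF lap_char_matrix_carrier restrict_mat_carrier])
  also have "kernel_dim (?A @\<^sub>r ?C) \<le> kernel_dim ?B"
    using kernel_dim_le_of_inj[OF AC lap_char_matrix_carrier restrict_mat_carrier
        mat_kernel_restrict_subtree(2)[OF tree UP two] inj] .
  also have "kernel_dim ?B \<le> lap_mult ?H ?HE lam" by (rule kernel_dim_le_lap_mult)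
  finally show ?thesis by simp
qed

theorem mainTheorem11:
  fixes V :: "'a set" and E :: "('a \<times> 'a) set" and u1 u2 u3 u4 :: 'a
  assumes tree: "is_tree V E"
    and p4: "card (pendant_vertices V E) \<ge> 4"
    and pend: "u1 \<in> pendant_vertices V E" "u2 \<in> pendant_vertices V E"
              "u3 \<in> pendant_vertices V E" "u4 \<in> pendant_vertices V E"
    and dist: "distinct [u1, u2, u3, u4]"
    and mult: "int (lap_mult V E 1) \<ge> int (card (pendant_vertices V E)) - 2"
  shows "lap_mult
           (\<Union>{path_verts E r s | r s. r \<in> {u1, u2, u3, u4} \<and> s \<in> {u1, u2, u3, u4} \<and> r \<noteq> s})
           (\<Union>{path_edges E r s | r s. r \<in> {u1, u2, u3, u4} \<and> s \<in> {u1, u2, u3, u4} \<and> r \<noteq> s})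
           1 \<ge> 2"
proof -
  let ?U = "{u1, u2, u3, u4}" and ?P = "pendant_vertices V E"
  have UP: "?U \<subseteq> ?P" using pend by simp
  have U4: "card ?U = 4" using dist by simp
  have "finite ?P"
    using tree finite_subset[of ?P V] unfolding is_tree_def simple_graph_def pendant_vertices_def by auto
  then have "card (?P - ?U) = card ?P - 4" using UP U4 by (simp add: card_Diff_subset)
  then have "lap_mult V E 1 \<le> lap_mult (subtree_verts E ?U) (subtree_edges E ?U) 1 + (card ?P - 4)"
    using lap_mult_le_subtree[OF tree UP] U4 by simp
  then show ?thesis using mult p4 unfolding subtree_verts_def subtree_edges_def by linarith
qed

end
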